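(* Let $r\ge2$ be an integer. If a sequence of positive integers $A$ satisfies $A(n)\le\frac{r-1}{140}(\log_2 n)^2$ for all sufficiently large $n$, then $A$ is not $r$-Ramsey complete.
   Context: $A(n)=|A\cap[n]|$ is the number of terms of $A$ that are at most $n$. For a sequence $S$ of positive integers, $\Sigma(S)$ is the set of sums of distinct terms of $S$. A sequence $A$ is $r$-Ramsey complete if, whenever $A$ is partitioned into $r$ classes $A_1,\dots,A_r$, every sufficiently large positive integer lies in $\bigcup_{i}\Sigma(A_i)$. *)

theory Defs
  imports Complex_Main
begin

definition count_upto :: "nat set \<Rightarrow> nat \<Rightarrow> nat" where
  "count_upto A n = card (A \<inter> {1..n})"

definition subsums :: "nat set \<Rightarrow> nat set" where
  "subsums S = {\<Sum>F | F. F \<subseteq> S \<and> finite F}"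

definition ramsey_complete :: "nat \<Rightarrow> nat set \<Rightarrow> bool" where
  "ramsey_complete r A \<longleftrightarrow>
     (\<forall>c :: nat \<Rightarrow> nat. (\<forall>a\<in>A. c a < r) \<longrightarrow>
        (\<exists>N. \<forall>n\<ge>N. \<exists>i<r. n \<in> subsums {a \<in> A. c a = i}))"

end

theory Submission
  imports Defs
begin

text \<open>The colouring is built in stages, each responsible for the terms in a block (m, 2^L]
  with L much larger than m. Since A has only O((r - 1) L^2) terms up to 2^L, averaging over
  L in [8D, 16D) gives a scale at which the small terms (32 D a < 2^L) have total size below
  (2/5) p 2^L and the remaining terms up to 2^L have small total weight, a term a weighing
  1 / (1 + D a / 2^L). The small terms are split into p = \<lceil>(r-1)/5\<rceil> classes of sum
  below 2^(L-1) - m^2, the others into q = r - p classes of small weight; by Rankin's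
  exponential moment bound each of the latter has at most 2^(7D+2) subsets of sum at most 2^L.
  As the terms up to m contribute at most m^2 to any subsum, a small class cannot reach
  2^(L-1), and fewer than 2^(L-1) numbers are represented using a class of the others; so
  some n in (2^(L-1), 2^L] is represented by no class of any colouring extending the stage.
  Gluing infinitely many stages gives a colouring that leaves arbitrarily large integers
  unrepresented.\<close>

text \<open>Rankin's trick: every counted S has weight exp (\<theta> (t - \<Sum>S)) \<ge> 1, and the
  weights of all subsets of B add up to the product.\<close>

lemma card_subsets_sum_le:
  fixes B :: "nat set" and \<theta> t :: real
  assumes fin: "finite B" and "\<theta> \<ge> 0"
  shows "real (card {S. S \<subseteq> B \<and> real (\<Sum>S) \<le> t}) \<le> exp (\<theta> * t) * (\<Prod>b\<in>B. 1 + exp (- \<theta> * real b))"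
proof -
  let ?C = "{S. S \<subseteq> B \<and> real (\<Sum>S) \<le> t}"
  have C: "?C \<subseteq> Pow B" by auto
  have exp_split: "exp (\<theta> * (t - real (\<Sum>S))) = exp (\<theta> * t) * (\<Prod>b\<in>S. exp (- \<theta> * real b))"
    if "S \<in> Pow B" for S
  proof -
    have "finite S" using that fin finite_subset by auto
    then have "(\<Prod>b\<in>S. exp (- \<theta> * real b)) = exp (\<Sum>b\<in>S. - \<theta> * real b)"
      by (simp add: exp_sum)
    also have "\<dots> = exp (- (\<theta> * real (\<Sum>S)))"
      by (simp add: sum_negf sum_distrib_left)
    finally have "(\<Prod>b\<in>S. exp (- \<theta> * real b)) = exp (- (\<theta> * real (\<Sum>S)))" .
    then show ?thesis by (simp add: right_diff_distrib exp_diff exp_minus field_simps)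
  qed
  have "real (card ?C) = (\<Sum>S\<in>?C. 1)" by simp
  also have "\<dots> \<le> (\<Sum>S\<in>?C. exp (\<theta> * (t - real (\<Sum>S))))"
    by (rule sum_mono) (use assms in auto)
  also have "\<dots> \<le> (\<Sum>S\<in>Pow B. exp (\<theta> * (t - real (\<Sum>S))))"
    by (rule sum_mono2) (use fin C in auto)
  also have "\<dots> = (\<Sum>S\<in>Pow B. exp (\<theta> * t) * (\<Prod>b\<in>S. exp (- \<theta> * real b)))"
    by (intro sum.cong refl exp_split)
  also have "\<dots> = exp (\<theta> * t) * (\<Sum>S\<in>Pow B. (\<Prod>b\<in>S. exp (- \<theta> * real b)) * (\<Prod>b\<in>B - S. 1))"
    by (simp add: sum_distrib_left)
  also have "\<dots> = exp (\<theta> * t) * (\<Prod>b\<in>B. exp (- \<theta> * real b) + 1)"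
    by (simp add: prod_add[OF fin])
  finally show ?thesis by (simp add: add.commute)
qed

lemma exists_le_average:
  fixes f :: "nat \<Rightarrow> real"
  assumes "q > 0"
  shows "\<exists>j<q. f j \<le> (\<Sum>j<q. f j) / q"
proof (rule ccontr)
  assume "\<not> ?thesis"
  then have "(\<Sum>j<q. (\<Sum>j<q. f j) / q) < (\<Sum>j<q. f j)"
    using assms by (intro sum_strict_mono) auto
  then show False using assms by simp
qed

lemma exists_balanced_colouring:
  fixes w :: "nat \<Rightarrow> real" and q :: nat
  assumes "finite B" "q > 0" "\<forall>b\<in>B. 0 \<le> w b \<and> w b \<le> W" "W \<ge> 0"
  shows "\<exists>g. (\<forall>b. g b < q) \<and> (\<forall>j. (\<Sum>b\<in>{b\<in>B. g b = j}. w b) \<le> (\<Sum>b\<in>B. w b) / q + W)"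
  using assms
proof (induction B rule: finite_induct)
  case empty
  then show ?case by (intro exI[of _ "\<lambda>_. 0"]) auto
next
  case (insert x F)
  from insert obtain g where g: "\<forall>b. g b < q"
    and load: "\<forall>j. (\<Sum>b\<in>{b\<in>F. g b = j}. w b) \<le> (\<Sum>b\<in>F. w b) / q + W" by auto
  let ?load = "\<lambda>j. (\<Sum>b\<in>{b\<in>F. g b = j}. w b)"
  have "(\<Sum>j<q. ?load j) = (\<Sum>b\<in>F. w b)"
    using g insert.hyps by (intro sum.group) auto
  txt \<open>Put the new element into a class whose load is at most the average.\<close>
  then obtain j0 where j0: "j0 < q" "?load j0 \<le> (\<Sum>b\<in>F. w b) / q"
    using exists_le_average[OF insert.prems(1), of ?load] by auto
  define g' where "g' = g(x := j0)"
  have wx: "0 \<le> w x / q" "w x \<le> W" using insert.prems by auto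
  have total: "(\<Sum>b\<in>insert x F. w b) / q = w x / q + (\<Sum>b\<in>F. w b) / q"
    using insert.hyps by (simp add: add_divide_distrib)
  have "(\<Sum>b\<in>{b\<in>insert x F. g' b = j}. w b) \<le> (\<Sum>b\<in>insert x F. w b) / q + W" for j
  proof (cases "j = j0")
    case True
    then have "{b\<in>insert x F. g' b = j} = insert x {b\<in>F. g b = j}"
      using insert.hyps by (auto simp: g'_def)
    then have "(\<Sum>b\<in>{b\<in>insert x F. g' b = j}. w b) = w x + ?load j"
      using insert.hyps by simp
    then show ?thesis using j0 wx total unfolding True by linarith
  next
    case False
    then have "{b\<in>insert x F. g' b = j} = {b\<in>F. g b = j}"
      using insert.hyps by (auto simp: g'_def)
    then show ?thesis using load[rule_format, of j] wx total by simp
  qed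
  moreover have "\<forall>b. g' b < q" using g j0 by (simp add: g'_def)
  ultimately show ?case by blast
qed

lemma sum_inverse_power2_gt:
  fixes y :: real
  assumes "finite S" "y > 0"
  shows "(\<Sum>L\<in>{L\<in>S. y < 2^L}. 1 / 2^L) \<le> 2 / y"
proof (cases "{L\<in>S. y < 2^L} = {}")
  case True
  then show ?thesis using assms by (subst True) simp
next
  case False
  let ?T = "{L\<in>S. y < 2^L}"
  have fin: "finite ?T" using assms by simp
  define L0 where "L0 = Min ?T"
  have L0: "y < 2^L0" using Min_in[OF fin False] by (simp add: L0_def)
  have L0_le: "L0 \<le> L" if "L \<in> ?T" for L using fin that by (simp add: L0_def)
  have inj: "inj_on (\<lambda>L. L - L0) ?T"
    using L0_le by (intro inj_on_diff_nat) auto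
  have "(\<Sum>L\<in>?T. 1 / (2::real)^L) = (1/2)^L0 * (\<Sum>L\<in>?T. (1/2::real)^(L - L0))"
    unfolding sum_distrib_left
    by (intro sum.cong refl) (simp add: L0_le power_divide flip: power_add)
  also have "(\<Sum>L\<in>?T. (1/2::real)^(L - L0)) = (\<Sum>i\<in>(\<lambda>L. L - L0) ` ?T. (1/2)^i)"
    by (simp add: sum.reindex[OF inj])
  also have "\<dots> \<le> 2"
    using geometric_sum_less[of "1/2::real" "(\<lambda>L. L - L0) ` ?T"] fin by simp
  also have "(1/2::real)^L0 \<le> 1 / y"
    using L0 assms by (simp add: power_divide frac_le)
  finally show ?thesis using assms by (simp add: mult.commute mult_left_mono)
qed

lemma sum_power2_le:
  fixes y :: real
  assumes "finite S" "y \<ge> 0"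
  shows "(\<Sum>L\<in>{L\<in>S. 2^L \<le> y}. 2^L) \<le> 2 * y"
proof (cases "{L\<in>S. 2^L \<le> y} = {}")
  case True
  then show ?thesis using assms by (subst True) simp
next
  case False
  let ?T = "{L\<in>S. 2^L \<le> y}"
  have fin: "finite ?T" using assms by simp
  define N where "N = Max ?T"
  have N: "2^N \<le> y" using Max_in[OF fin False] by (simp add: N_def)
  have "(\<Sum>L\<in>?T. (2::real)^L) \<le> (\<Sum>L<Suc N. 2^L)"
    by (rule sum_mono2) (use fin in \<open>auto simp: N_def less_Suc_eq_le\<close>)
  also have "\<dots> = 2 * 2^N - 1" using geometric_sum[of "2::real" "Suc N"] by simp
  finally show ?thesis using N by simp
qed

lemma card_power2_window:
  fixes x :: real
  shows "card {L\<in>S. x < 2^k * 2^L \<and> 2^L \<le> x} \<le> k"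
proof (cases "{L\<in>S. x < 2^k * 2^L \<and> 2^L \<le> x} = {}")
  case True
  then show ?thesis by (subst True) simp
next
  case False
  let ?P = "\<lambda>L. L \<in> S \<and> x < 2^k * 2^L \<and> 2^L \<le> x"
  define L0 where "L0 = (LEAST L. ?P L)"
  have L0: "x < 2^k * 2^L0" using False LeastI_ex[of ?P] by (auto simp: L0_def)
  have "{L\<in>S. x < 2^k * 2^L \<and> 2^L \<le> x} \<subseteq> {L0..<L0 + k}"
  proof
    fix L assume L: "L \<in> {L\<in>S. x < 2^k * 2^L \<and> 2^L \<le> x}"
    then have "L0 \<le> L" by (simp add: L0_def Least_le)
    moreover have "(2::real)^L < 2^(L0 + k)"
      using L L0 by (simp add: power_add mult.commute)
    ultimately show "L \<in> {L0..<L0 + k}" by simp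
  qed
  then show ?thesis using card_mono[of "{L0..<L0 + k}"] by fastforce
qed

lemma one_plus_exp_neg_le:
  fixes x :: real
  assumes "x \<ge> 0"
  shows "1 + exp (-x) \<le> exp (1 / (1 + x))"
proof -
  have "exp (-x) \<le> 1 / (1 + x)"
    using exp_ge_add_one_self[of x] assms by (simp add: exp_minus divide_simps)
  then show ?thesis using exp_ge_add_one_self[of "1 / (1 + x)"] by linarith
qed

lemma exp_le_power2:
  fixes x :: real
  assumes "x \<le> 3/5 * K"
  shows "exp x \<le> 2 ^ K"
proof -
  have "exp x \<le> exp (real K * (3/5))" using assms by (simp add: mult.commute)
  also have "\<dots> = exp (3/5) ^ K" by (rule exp_of_nat_mult)
  also have "\<dots> \<le> 2 ^ K"
    using exp_bound[of "3/5"] by (intro power_mono) (simp_all add: power2_eq_square)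
  finally show ?thesis .
qed

lemma exists_below_both_averages:
  fixes f g :: "'a \<Rightarrow> real"
  assumes "finite W" "\<forall>x\<in>W. 0 \<le> f x \<and> 0 \<le> g x" "\<alpha> > 0" "\<beta> > 0"
    and "(\<Sum>x\<in>W. f x) / \<alpha> + (\<Sum>x\<in>W. g x) / \<beta> < card W"
  shows "\<exists>x\<in>W. f x < \<alpha> \<and> g x < \<beta>"
proof (rule ccontr)
  assume contra: "\<not> ?thesis"
  have "1 \<le> f x / \<alpha> + g x / \<beta>" if "x \<in> W" for x
  proof -
    have "0 \<le> f x / \<alpha>" "0 \<le> g x / \<beta>" using that assms(2-4) by auto
    moreover have "\<alpha> \<le> f x \<or> \<beta> \<le> g x" using that contra by auto
    then have "1 \<le> f x / \<alpha> \<or> 1 \<le> g x / \<beta>" using assms(3,4) by auto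
    ultimately show ?thesis by linarith
  qed
  then have "(\<Sum>x\<in>W. 1) \<le> (\<Sum>x\<in>W. f x / \<alpha> + g x / \<beta>)" by (intro sum_mono)
  then show False using assms(5) by (simp add: sum.distrib sum_divide_distrib)
qed

lemma sum_le_square_if_le:
  fixes F :: "nat set"
  assumes "\<forall>a\<in>F. a \<le> m"
  shows "\<Sum>F \<le> m * m"
proof -
  have "\<Sum>F \<le> \<Sum>{0..m}" by (rule sum_mono2) (use assms in auto)
  also have "\<dots> = m * Suc m div 2" by (rule gauss_sum_nat)
  also have "\<dots> \<le> 2 * (m * m) div 2" by (rule div_le_mono) (cases m, auto)
  also have "\<dots> = m * m" by simp
  finally show ?thesis .
qed

lemma exists_outside_small_set:
  assumes "finite E" "card E < H"
  shows "\<exists>n. H < n \<and> n \<le> 2 * H \<and> n \<notin> E"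
proof -
  have "\<not> {H<..2 * H} \<subseteq> E"
    using card_mono[OF assms(1), of "{H<..2 * H}"] assms(2) by auto
  then show ?thesis by auto
qed

definition small_terms :: "nat set \<Rightarrow> nat \<Rightarrow> nat \<Rightarrow> nat set" where
  "small_terms A D L = {a\<in>A. 32 * D * a < 2^L}"

definition medium_terms :: "nat set \<Rightarrow> nat \<Rightarrow> nat \<Rightarrow> nat set" where
  "medium_terms A D L = {a\<in>A. 2^L \<le> 32 * D * a \<and> a \<le> 2^L}"

text \<open>The weight is chosen so that 1 + exp (- D a / 2^L) \<le> exp (medium_weight D L a), which
  turns Rankin's bound with \<theta> = D / 2^L into a bound by the total weight.\<close>

definition medium_weight :: "nat \<Rightarrow> nat \<Rightarrow> nat \<Rightarrow> real" where
  "medium_weight D L a = 1 / (1 + real D * real a / 2^L)"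

lemma small_terms_less:
  assumes "a \<in> small_terms A D L" "D > 0"
  shows "a < 2^L"
proof -
  have "a \<le> 32 * D * a" using assms(2) by simp
  moreover have "32 * D * a < 2^L" using assms(1) by (simp add: small_terms_def)
  ultimately show ?thesis by (rule le_less_trans)
qed

lemma finite_small_terms: "D > 0 \<Longrightarrow> finite (small_terms A D L)"
  by (rule finite_subset[of _ "{..<2^L}"]) (auto dest: small_terms_less)

lemma finite_medium_terms: "finite (medium_terms A D L)"
  by (rule finite_subset[of _ "{..2^L}"]) (auto simp: medium_terms_def)

lemma medium_weight_bounds: "0 < medium_weight D L a" "medium_weight D L a \<le> 1"
  by (simp_all add: medium_weight_def add_pos_nonneg)

lemma small_term_scale_sum_le:
  fixes D a :: nat
  assumes "finite W" "D > 0"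
  shows "(\<Sum>L\<in>{L\<in>W. 32 * D * a < 2^L}. real a / 2^L) \<le> 1 / (16 * D)"
proof (cases "a = 0")
  case False
  have "{L\<in>W. 32 * D * a < 2^L} = {L\<in>W. real (32 * D * a) < 2^L}"
    by (simp only: of_nat_less_numeral_power_cancel_iff)
  then have "(\<Sum>L\<in>{L\<in>W. 32 * D * a < 2^L}. real a / 2^L)
      = real a * (\<Sum>L\<in>{L\<in>W. real (32 * D * a) < 2^L}. 1 / 2^L)"
    by (simp add: sum_distrib_left)
  also have "\<dots> \<le> real a * (2 / real (32 * D * a))"
    using False assms by (intro mult_left_mono sum_inverse_power2_gt) auto
  also have "\<dots> = 1 / (16 * D)" using False by simp
  finally show ?thesis .
qed (simp add: assms)

lemma sum_inverse_one_plus_ratio_le: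
  fixes y :: real
  assumes "finite S" "y > 0"
  shows "(\<Sum>L\<in>{L\<in>S. 2^L \<le> 32 * y}. 1 / (1 + y / 2^L)) \<le> 7"
proof -
  let ?f = "\<lambda>L. 1 / (1 + y / 2^L)"
  let ?S1 = "{L\<in>S. 2^L \<le> y}" and ?S2 = "{L\<in>S. y < 2^L \<and> 2^L \<le> 32 * y}"
  have split: "{L\<in>S. 2^L \<le> 32 * y} = ?S1 \<union> ?S2" using assms by auto
  have "?f L \<le> 1 / (y / 2^L)" for L
    using assms by (intro frac_le) auto
  then have "(\<Sum>L\<in>?S1. ?f L) \<le> (\<Sum>L\<in>?S1. 2^L / y)"
    by (intro sum_mono) simp
  also have "\<dots> = (\<Sum>L\<in>?S1. 2^L) / y" by (simp add: sum_divide_distrib)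
  also have "\<dots> \<le> 2 * y / y"
    using assms by (intro divide_right_mono sum_power2_le) auto
  finally have S1: "(\<Sum>L\<in>?S1. ?f L) \<le> 2" using assms by simp
  have "(\<Sum>L\<in>?S2. ?f L) \<le> card ?S2"
    using assms sum_bounded_above[of ?S2 ?f 1] by (simp add: add_pos_nonneg)
  also have "card ?S2 \<le> 5"
    using card_power2_window[of S "32 * y" 5] by simp
  finally have S2: "(\<Sum>L\<in>?S2. ?f L) \<le> 5" by simp
  have "(\<Sum>L\<in>{L\<in>S. 2^L \<le> 32 * y}. ?f L) = (\<Sum>L\<in>?S1. ?f L) + (\<Sum>L\<in>?S2. ?f L)"
    unfolding split by (rule sum.union_disjoint) (use assms in auto)
  then show ?thesis using S1 S2 by linarith
qed

lemma small_terms_eq: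
  assumes "0 \<notin> A" "D > 0" "L \<le> 16 * D"
  shows "small_terms A D L = {a \<in> A \<inter> {1..2^(16*D)}. 32 * D * a < 2^L}"
proof (intro subset_antisym subsetI)
  fix a assume a: "a \<in> small_terms A D L"
  then have "a < 2^L" using assms(2) by (rule small_terms_less)
  also have "(2::nat)^L \<le> 2^(16*D)" using assms(3) by simp
  finally show "a \<in> {a \<in> A \<inter> {1..2^(16*D)}. 32 * D * a < 2^L}"
    using a assms(1) by (auto simp: small_terms_def Suc_le_eq intro: gr0I)
qed (simp add: small_terms_def)

lemma medium_terms_eq:
  assumes "0 \<notin> A" "L \<le> 16 * D"
  shows "medium_terms A D L = {a \<in> A \<inter> {1..2^(16*D)}. 2^L \<le> 32 * D * a \<and> a \<le> 2^L}"
proof -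
  have "(2::nat)^L \<le> 2^(16*D)" using assms(2) by simp
  then show ?thesis using assms(1) by (auto simp: medium_terms_def Suc_le_eq intro: order.trans gr0I)
qed

lemma small_terms_scale_sum_le:
  assumes "0 \<notin> A" "D > 0"
  shows "(\<Sum>L\<in>{8*D..<16*D}. real (\<Sum>(small_terms A D L)) / 2^L) \<le> count_upto A (2^(16*D)) / (16 * D)"
proof -
  let ?W = "{8*D..<16*D}" and ?A = "A \<inter> {1..2^(16*D)}"
  have "(\<Sum>L\<in>?W. real (\<Sum>(small_terms A D L)) / 2^L)
      = (\<Sum>L\<in>?W. \<Sum>a\<in>{a\<in>?A. 32 * D * a < 2^L}. real a / 2^L)"
    using assms by (intro sum.cong refl) (simp add: small_terms_eq sum_divide_distrib)
  also have "\<dots> = (\<Sum>a\<in>?A. \<Sum>L\<in>{L\<in>?W. 32 * D * a < 2^L}. real a / 2^L)"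
    by (rule sum.swap_restrict) simp_all
  also have "\<dots> \<le> (\<Sum>a\<in>?A. 1 / (16 * D))"
    using assms(2) by (intro sum_mono small_term_scale_sum_le) simp_all
  finally show ?thesis by (simp add: count_upto_def)
qed

lemma medium_terms_scale_sum_le:
  assumes "0 \<notin> A" "D > 0"
  shows "(\<Sum>L\<in>{8*D..<16*D}. \<Sum>a\<in>medium_terms A D L. medium_weight D L a) \<le> 7 * count_upto A (2^(16*D))"
proof -
  let ?W = "{8*D..<16*D}" and ?A = "A \<inter> {1..2^(16*D)}"
  have "(\<Sum>L\<in>?W. \<Sum>a\<in>medium_terms A D L. medium_weight D L a)
      = (\<Sum>L\<in>?W. \<Sum>a\<in>{a\<in>?A. 2^L \<le> 32 * D * a \<and> a \<le> 2^L}. medium_weight D L a)"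
    using assms by (intro sum.cong refl) (simp add: medium_terms_eq)
  also have "\<dots> = (\<Sum>a\<in>?A. \<Sum>L\<in>{L\<in>?W. 2^L \<le> 32 * D * a \<and> a \<le> 2^L}. medium_weight D L a)"
    by (rule sum.swap_restrict) simp_all
  also have "\<dots> \<le> (\<Sum>a\<in>?A. 7)"
  proof (rule sum_mono)
    fix a assume "a \<in> ?A"
    then have a: "real D * real a > 0" using assms(2) by simp
    have "(\<Sum>L\<in>{L\<in>?W. 2^L \<le> 32 * D * a \<and> a \<le> 2^L}. medium_weight D L a)
        \<le> (\<Sum>L\<in>{L\<in>?W. 2^L \<le> 32 * D * a}. medium_weight D L a)"
      using medium_weight_bounds(1)[of D _ a] by (intro sum_mono2) (auto intro: less_imp_le)
    also have "{L\<in>?W. 2^L \<le> 32 * D * a} = {L\<in>?W. 2^L \<le> real (32 * D * a)}"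
      by (simp only: numeral_power_le_of_nat_cancel_iff)
    also have "(\<Sum>L\<in>\<dots>. medium_weight D L a)
        = (\<Sum>L\<in>{L\<in>?W. 2^L \<le> 32 * (real D * real a)}. 1 / (1 + real D * real a / 2^L))"
      by (simp add: medium_weight_def mult.assoc)
    also have "\<dots> \<le> 7" using a by (intro sum_inverse_one_plus_ratio_le) simp_all
    finally show "(\<Sum>L\<in>{L\<in>?W. 2^L \<le> 32 * D * a \<and> a \<le> 2^L}. medium_weight D L a) \<le> 7" .
  qed
  finally show ?thesis by (simp add: count_upto_def)
qed

lemma exists_good_scale:
  fixes A :: "nat set" and D p q :: nat and c :: real
  assumes "0 \<notin> A" "D > 0" "p > 0" "q > 0" "c \<le> 5 * p" "4 * c \<le> 5 * q"
    and count: "real (count_upto A (2^(16*D))) \<le> c / 140 * (16 * real D)^2"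
  shows "\<exists>L\<in>{8*D..<16*D}. real (\<Sum>(small_terms A D L)) < 2/5 * p * 2^L \<and>
           (\<Sum>a\<in>medium_terms A D L. medium_weight D L a) < 16/5 * q * D"
proof -
  define W where "W = {8*D..<16*D}"
  define K where "K = real (count_upto A (2^(16*D)))"
  define f where "f L = real (\<Sum>(small_terms A D L)) / 2^L" for L :: nat
  define g where "g L = (\<Sum>a\<in>medium_terms A D L. medium_weight D L a)" for L
  have K: "K \<le> c * 64/35 * real D ^ 2"
    using count by (simp add: K_def power2_eq_square)
  have "(\<Sum>L\<in>W. f L) / (2/5 * p) \<le> K / (16 * D) / (2/5 * p)"
    using small_terms_scale_sum_le[OF assms(1,2)] assms(3)
    by (intro divide_right_mono) (auto simp: W_def f_def K_def)
  also have "\<dots> \<le> 10/7 * D"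
  proof -
    have "c * 64/35 * real D ^ 2 \<le> 64/7 * p * real D ^ 2"
      using mult_right_mono[OF assms(5) zero_le_power2[of "real D"]] by simp
    then have "7 * K \<le> 64 * p * real D ^ 2" using K by linarith
    then show ?thesis using assms(2,3) by (simp add: field_simps power2_eq_square)
  qed
  finally have f_avg: "(\<Sum>L\<in>W. f L) / (2/5 * p) \<le> 10/7 * D" .
  have "(\<Sum>L\<in>W. g L) / (16/5 * q * D) \<le> 7 * K / (16/5 * q * D)"
    using medium_terms_scale_sum_le[OF assms(1,2)] assms(2,4)
    by (intro divide_right_mono) (auto simp: W_def g_def K_def)
  also have "\<dots> \<le> 5 * D"
  proof -
    have "c * 64/35 * real D ^ 2 \<le> 16/7 * q * real D ^ 2"
      using mult_right_mono[OF assms(6) zero_le_power2[of "real D"]] by simp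
    then have "7 * K \<le> 16 * q * real D ^ 2" using K by linarith
    then show ?thesis using assms(2,4) by (simp add: field_simps power2_eq_square)
  qed
  finally have g_avg: "(\<Sum>L\<in>W. g L) / (16/5 * q * D) \<le> 5 * D" .
  have avg: "(\<Sum>L\<in>W. f L) / (2/5 * p) + (\<Sum>L\<in>W. g L) / (16/5 * q * D) < card W"
    using f_avg g_avg assms(2) by (simp add: W_def)
  have nonneg: "\<forall>L\<in>W. 0 \<le> f L \<and> 0 \<le> g L"
    by (simp add: f_def g_def sum_nonneg less_imp_le[OF medium_weight_bounds(1)])
  have pos: "(0::real) < 2/5 * p" "(0::real) < 16/5 * q * D" using assms(2-4) by auto
  obtain L where L: "L \<in> W" "f L < 2/5 * p" "g L < 16/5 * q * D"
    using exists_below_both_averages[OF _ nonneg pos avg] by (auto simp: W_def)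
  then have "real (\<Sum>(small_terms A D L)) < 2/5 * p * 2^L"
    by (simp add: f_def divide_less_eq)
  then show ?thesis using L by (auto simp: W_def g_def)
qed

definition blocks :: "nat set \<Rightarrow> nat \<Rightarrow> nat \<Rightarrow> (nat \<Rightarrow> nat) \<Rightarrow> nat \<Rightarrow> bool" where
  "blocks A m M g n \<longleftrightarrow>
     (\<forall>c. (\<forall>a\<in>A. m < a \<and> a \<le> M \<longrightarrow> c a = g a) \<longrightarrow> (\<forall>i. n \<notin> subsums {a\<in>A. c a = i}))"

text \<open>The summand x accounts for the terms up to m, whose distinct sums are at most m * m.\<close>

lemma blocksI:
  assumes "n \<le> M"
    and avoid: "\<And>i F x. F \<subseteq> {a\<in>A. m < a \<and> a \<le> M \<and> g a = i} \<Longrightarrow> finite F \<Longrightarrow> x \<le> m * m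
                  \<Longrightarrow> n \<noteq> \<Sum>F + x"
  shows "blocks A m M g n"
  unfolding blocks_def
proof (intro allI impI notI)
  fix c i
  assume agree: "\<forall>a\<in>A. m < a \<and> a \<le> M \<longrightarrow> c a = g a"
    and "n \<in> subsums {a\<in>A. c a = i}"
  then obtain F where F: "finite F" "F \<subseteq> {a\<in>A. c a = i}" and n: "n = \<Sum>F"
    unfolding subsums_def by blast
  define Fo where "Fo = {a\<in>F. a \<le> m}"
  define Fn where "Fn = {a\<in>F. m < a}"
  have "F = Fn \<union> Fo" by (auto simp: Fo_def Fn_def)
  moreover have "\<Sum>(Fn \<union> Fo) = \<Sum>Fn + \<Sum>Fo"
    by (rule sum.union_disjoint) (use F(1) in \<open>auto simp: Fo_def Fn_def\<close>)
  ultimately have "\<Sum>F = \<Sum>Fn + \<Sum>Fo" by simp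
  moreover have "\<Sum>Fo \<le> m * m" by (rule sum_le_square_if_le) (simp add: Fo_def)
  moreover have "Fn \<subseteq> {a\<in>A. m < a \<and> a \<le> M \<and> g a = i}"
  proof
    fix a assume a: "a \<in> Fn"
    then have "a \<le> n" unfolding n using F(1) by (intro member_le_sum) (auto simp: Fn_def)
    then show "a \<in> {a\<in>A. m < a \<and> a \<le> M \<and> g a = i}"
      using a F(2) agree assms(1) by (auto simp: Fn_def)
  qed
  ultimately show False using avoid[of Fn i "\<Sum>Fo"] F(1) n by (simp add: Fn_def)
qed

lemma card_subsets_sum_le_medium_weight:
  assumes "finite B"
  shows "real (card {S. S \<subseteq> B \<and> \<Sum>S \<le> 2^L}) \<le> exp (real D + (\<Sum>b\<in>B. medium_weight D L b))"
proof -
  let ?\<theta> = "real D / 2^L"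
  have "{S. S \<subseteq> B \<and> \<Sum>S \<le> 2^L} = {S. S \<subseteq> B \<and> real (\<Sum>S) \<le> 2^L}"
    by (simp only: of_nat_le_numeral_power_cancel_iff)
  then have "real (card {S. S \<subseteq> B \<and> \<Sum>S \<le> 2^L})
      \<le> exp (?\<theta> * 2^L) * (\<Prod>b\<in>B. 1 + exp (- ?\<theta> * real b))"
    using card_subsets_sum_le[OF assms, of ?\<theta> "2^L"] by simp
  also have "(\<Prod>b\<in>B. 1 + exp (- ?\<theta> * real b)) \<le> (\<Prod>b\<in>B. exp (medium_weight D L b))"
  proof (rule prod_mono)
    fix b
    have "1 + exp (- (real D * real b / 2^L)) \<le> exp (medium_weight D L b)"
      unfolding medium_weight_def by (rule one_plus_exp_neg_le) simp
    then show "0 \<le> 1 + exp (- ?\<theta> * real b) \<and> 1 + exp (- ?\<theta> * real b) \<le> exp (medium_weight D L b)"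
      by (simp add: add_nonneg_nonneg)
  qed
  also have "(\<Prod>b\<in>B. exp (medium_weight D L b)) = exp (\<Sum>b\<in>B. medium_weight D L b)"
    by (simp add: exp_sum assms)
  finally show ?thesis by (simp add: exp_add)
qed

lemma small_terms_colouring:
  fixes A :: "nat set" and D L m p :: nat
  assumes "D > 0" "p > 0" "16 * (m * m) \<le> 2^L"
    and small: "real (\<Sum>(small_terms A D L)) < 2/5 * p * 2^L"
  shows "\<exists>g. (\<forall>a. g a < p) \<and> (\<forall>i. 2 * (\<Sum>{a\<in>small_terms A D L. g a = i} + m * m) < 2^L)"
proof -
  have bounds: "\<forall>a\<in>small_terms A D L. 0 \<le> real a \<and> real a \<le> 2^L / (32 * D)"
  proof
    fix a assume "a \<in> small_terms A D L"
    then have "32 * D * a < 2^L" by (simp add: small_terms_def)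
    then have "real (32 * D * a) < 2^L" by (simp only: of_nat_less_numeral_power_cancel_iff)
    then have "real a * (32 * D) < 2^L" by (simp add: ac_simps)
    then show "0 \<le> real a \<and> real a \<le> 2^L / (32 * D)" using assms(1) by (simp add: le_divide_eq)
  qed
  then obtain g where g: "\<forall>a. g a < p"
    and balanced: "\<And>i. (\<Sum>a\<in>{a\<in>small_terms A D L. g a = i}. real a)
                    \<le> (\<Sum>a\<in>small_terms A D L. real a) / p + 2^L / (32 * D)"
    using exists_balanced_colouring[OF finite_small_terms[OF assms(1)] assms(2) bounds] by auto
  have "2 * (\<Sum>{a\<in>small_terms A D L. g a = i} + m * m) < 2^L" for i
  proof -
    have "(\<Sum>a\<in>small_terms A D L. real a) / p < 2/5 * 2^L"
      using small assms(2) by (simp add: divide_less_eq of_nat_sum mult_ac)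
    moreover have "(2::real)^L / (32 * D) \<le> 2^L / 32"
      using assms(1) by (intro divide_left_mono) auto
    ultimately have "(\<Sum>a\<in>{a\<in>small_terms A D L. g a = i}. real a) < 2/5 * 2^L + 2^L / 32"
      using balanced[of i] by linarith
    moreover have "real (16 * (m * m)) \<le> 2^L"
      using assms(3) by (simp only: of_nat_le_numeral_power_cancel_iff)
    ultimately have "2 * ((\<Sum>a\<in>{a\<in>small_terms A D L. g a = i}. real a) + real (m * m)) < 2^L * (2 * (2/5 + 1/32 + 1/16))"
      by (simp add: algebra_simps)
    also have "\<dots> < 2^L" by simp
    finally have "real (2 * (\<Sum>{a\<in>small_terms A D L. g a = i} + m * m)) < 2^L"
      by (simp add: of_nat_sum)
    then show ?thesis by (simp only: of_nat_less_numeral_power_cancel_iff)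
  qed
  then show ?thesis using g by blast
qed

lemma medium_terms_colouring:
  fixes A :: "nat set" and D L q :: nat
  assumes "q > 0" and medium: "(\<Sum>a\<in>medium_terms A D L. medium_weight D L a) < 16/5 * q * D"
  shows "\<exists>g. (\<forall>a. g a < q) \<and>
    (\<forall>j. card {S. S \<subseteq> {a\<in>medium_terms A D L. g a = j} \<and> \<Sum>S \<le> 2^L} \<le> 2^(7*D+2))"
proof -
  obtain g where g: "\<forall>a. g a < q"
    and balanced: "\<And>j. (\<Sum>a\<in>{a\<in>medium_terms A D L. g a = j}. medium_weight D L a)
                    \<le> (\<Sum>a\<in>medium_terms A D L. medium_weight D L a) / q + 1"
    using exists_balanced_colouring[OF finite_medium_terms[of A D L] assms(1), where w="medium_weight D L" and W=1]
    by (auto simp: less_imp_le[OF medium_weight_bounds(1)] medium_weight_bounds(2))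
  have "card {S. S \<subseteq> {a\<in>medium_terms A D L. g a = j} \<and> \<Sum>S \<le> 2^L} \<le> 2^(7*D+2)" for j
  proof -
    let ?B = "{a\<in>medium_terms A D L. g a = j}"
    have "(\<Sum>a\<in>medium_terms A D L. medium_weight D L a) / q < 16/5 * D"
      using medium assms(1) by (simp add: divide_less_eq mult_ac)
    moreover have "3/5 * real (7*D+2) = 21/5 * real D + 6/5" by simp
    ultimately have weight: "real D + (\<Sum>b\<in>?B. medium_weight D L b) \<le> 3/5 * real (7*D+2)"
      using balanced[of j] by linarith
    have "finite ?B" using finite_medium_terms[of A D L] by simp
    then have "real (card {S. S \<subseteq> ?B \<and> \<Sum>S \<le> 2^L}) \<le> exp (real D + (\<Sum>b\<in>?B. medium_weight D L b))"
      by (rule card_subsets_sum_le_medium_weight)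
    also have "\<dots> \<le> 2^(7*D+2)" using weight by (rule exp_le_power2)
    finally show ?thesis by (simp only: of_nat_le_numeral_power_cancel_iff)
  qed
  then show ?thesis using g by blast
qed

lemma square_less_power4: "m * m < 2^(2*m)"
proof -
  have "m * m < 2^m * 2^m" using less_exp[of m] by (intro mult_strict_mono) auto
  then show ?thesis by (simp add: power_add mult_2)
qed

lemma exists_number_avoiding_bounded_sums:
  fixes B :: "nat \<Rightarrow> nat set"
  assumes fin: "\<And>j. finite (B j)" and few: "\<And>j. card {S. S \<subseteq> B j \<and> \<Sum>S \<le> 2^L} \<le> 2^K"
    and "q + K + 2 * m + 1 \<le> L"
  shows "\<exists>n. 2^L < 2 * n \<and> n \<le> 2^L \<and>
    (\<forall>j<q. \<forall>S x. S \<subseteq> B j \<and> \<Sum>S \<le> 2^L \<and> x \<le> m * m \<longrightarrow> n \<noteq> \<Sum>S + x)"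
proof -
  define bounded where "bounded j = {S. S \<subseteq> B j \<and> \<Sum>S \<le> 2^L}" for j
  define E where "E = (\<Union>j<q. (\<lambda>(S, x). \<Sum>S + x) ` (bounded j \<times> {..m * m}))"
  have fin_bounded: "finite (bounded j)" for j
    by (rule finite_subset[of _ "Pow (B j)"]) (auto simp: bounded_def fin)
  have "card E \<le> (\<Sum>j<q. card (bounded j \<times> {..m * m}))"
    unfolding E_def by (intro order.trans[OF card_UN_le] sum_mono card_image_le) (auto simp: fin_bounded)
  also have "\<dots> \<le> (\<Sum>j<q. 2^K * 2^(2*m))"
  proof (rule sum_mono)
    fix j
    have "card {..m * m} \<le> 2^(2*m)" using square_less_power4[of m] by simp
    then show "card (bounded j \<times> {..m * m}) \<le> 2^K * 2^(2*m)"
      unfolding card_cartesian_product bounded_def by (rule mult_mono[OF few]) simp_all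
  qed
  also have "\<dots> < 2^q * 2^K * 2^(2*m)" using less_exp[of q] by simp
  also have "\<dots> = 2^(q + K + 2*m)" by (simp only: power_add)
  also have "\<dots> \<le> 2^(L - 1)" using assms(3) by (intro power_increasing) auto
  finally have "card E < 2^(L - 1)" .
  moreover have finite_E: "finite E" unfolding E_def using fin_bounded by auto
  ultimately obtain n where n: "2^(L - 1) < n" "n \<le> 2 * 2^(L - 1)" "n \<notin> E"
    using exists_outside_small_set[OF finite_E] by blast
  have "2 * 2^(L - 1) = (2::nat)^L" using assms(3) by (cases L) auto
  then show ?thesis using n unfolding E_def bounded_def by force
qed

lemma blocks_combined_colouring:
  fixes A :: "nat set" and D L m n p q :: nat
  assumes "D > 0" "n \<le> 2^L" "2^L < 2 * n"
    and small: "\<And>i. 2 * (\<Sum>{a\<in>small_terms A D L. gs a = i} + m * m) < 2^L"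
    and gs: "\<forall>a. gs a < p" and gm: "\<forall>a. gm a < q"
    and avoid: "\<And>j S x. j < q \<Longrightarrow> S \<subseteq> {a\<in>medium_terms A D L. gm a = j} \<Longrightarrow> \<Sum>S \<le> 2^L
                  \<Longrightarrow> x \<le> m * m \<Longrightarrow> n \<noteq> \<Sum>S + x"
  shows "blocks A m (2^L) (\<lambda>a. if a \<in> small_terms A D L then gs a else p + gm a) n"
proof (rule blocksI[OF assms(2)])
  let ?g = "\<lambda>a. if a \<in> small_terms A D L then gs a else p + gm a"
  fix i F x
  assume F: "F \<subseteq> {a\<in>A. m < a \<and> a \<le> 2^L \<and> ?g a = i}" "finite F" and x: "x \<le> m * m"
  show "n \<noteq> \<Sum>F + x"
  proof (cases "F \<subseteq> small_terms A D L")
    case True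
    then have "F \<subseteq> {a\<in>small_terms A D L. gs a = i}" using F(1) by fastforce
    then have "\<Sum>F \<le> \<Sum>{a\<in>small_terms A D L. gs a = i}"
      using finite_small_terms[OF assms(1)] by (intro sum_mono2) auto
    then show ?thesis using small[of i] x assms(3) unfolding distrib_left by linarith
  next
    case False
    then obtain a0 where a0: "a0 \<in> F" "a0 \<notin> small_terms A D L" by blast
    define j where "j = gm a0"
    have i: "i = p + j" using a0 F(1) by (auto simp: j_def)
    have "F \<subseteq> {a\<in>medium_terms A D L. gm a = j}"
    proof
      fix a assume a: "a \<in> F"
      then have "?g a = i" using F(1) by auto
      then have "a \<notin> small_terms A D L" using gs i by (metis not_add_less1)
      then show "a \<in> {a\<in>medium_terms A D L. gm a = j}"
        using a F(1) i by (auto simp: small_terms_def medium_terms_def)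
    qed
    moreover have "j < q" using gm by (simp add: j_def)
    ultimately show ?thesis using avoid[of j F x] x assms(2) by fastforce
  qed
qed

lemma exists_blocked_number:
  fixes A :: "nat set" and D L m p q :: nat
  assumes "D > 0" "p > 0" "q > 0" "2 * m + 4 \<le> L" "q + 7 * D + 2 * m + 3 \<le> L"
    and small: "real (\<Sum>(small_terms A D L)) < 2/5 * p * 2^L"
    and medium: "(\<Sum>a\<in>medium_terms A D L. medium_weight D L a) < 16/5 * q * D"
  shows "\<exists>g n. (\<forall>a. g a < p + q) \<and> 2^L < 2 * n \<and> blocks A m (2^L) g n"
proof -
  have "16 * (m * m) < 2^(2*m + 4)" using square_less_power4[of m] by (simp add: power_add)
  also have "\<dots> \<le> 2^L" using assms(4) by (intro power_increasing) auto
  finally obtain gs where gs: "\<forall>a. gs a < p"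
    and gs_small: "\<And>i. 2 * (\<Sum>{a\<in>small_terms A D L. gs a = i} + m * m) < 2^L"
    using small_terms_colouring[OF assms(1,2) _ small] by (meson less_imp_le)
  obtain gm where gm: "\<forall>a. gm a < q"
    and gm_sparse: "\<And>j. card {S. S \<subseteq> {a\<in>medium_terms A D L. gm a = j} \<and> \<Sum>S \<le> 2^L} \<le> 2^(7*D+2)"
    using medium_terms_colouring[OF assms(3) medium] by blast
  have "\<exists>n. 2^L < 2 * n \<and> n \<le> 2^L \<and> (\<forall>j<q. \<forall>S x. S \<subseteq> {a\<in>medium_terms A D L. gm a = j} \<and>
            \<Sum>S \<le> 2^L \<and> x \<le> m * m \<longrightarrow> n \<noteq> \<Sum>S + x)"
    by (rule exists_number_avoiding_bounded_sums[OF _ gm_sparse]) (use assms(5) finite_medium_terms in simp_all)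
  then obtain n where n_large: "2^L < 2 * n" and n_le: "n \<le> 2^L"
    and avoid: "\<And>j S x. j < q \<Longrightarrow> S \<subseteq> {a\<in>medium_terms A D L. gm a = j} \<Longrightarrow> \<Sum>S \<le> 2^L
                  \<Longrightarrow> x \<le> m * m \<Longrightarrow> n \<noteq> \<Sum>S + x"
    by blast
  define g where "g a = (if a \<in> small_terms A D L then gs a else p + gm a)" for a
  have "blocks A m (2^L) g n"
    unfolding g_def using assms(1) n_le n_large gs_small gs gm avoid by (rule blocks_combined_colouring)
  moreover have "\<forall>a. g a < p + q" using gs gm by (simp add: g_def add_less_le_mono trans_less_add1)
  ultimately show ?thesis using n_large by blast
qed

lemma not_ramsey_complete_if_blocking:
  assumes "\<And>m. \<exists>M g n. m < M \<and> m < n \<and> (\<forall>a. g a < r) \<and> blocks A m M g n"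
  shows "\<not> ramsey_complete r A"
proof
  assume complete: "ramsey_complete r A"
  obtain M g n where stage: "\<And>m. m < M m" "\<And>m. m < n m" "\<And>m a. g m a < r"
    and blocking: "\<And>m. blocks A m (M m) (g m) (n m)"
    using assms by metis
  define bound where "bound t = (M ^^ t) 0" for t
  have bound_Suc: "bound (Suc t) = M (bound t)" for t by (simp add: bound_def)
  have mono: "strict_mono bound" using stage(1) by (simp add: strict_mono_Suc_iff bound_Suc)
  define stage_of where "stage_of a = (LEAST t. a \<le> bound (Suc t))" for a
  have stage_of: "stage_of a = t" if "bound t < a" "a \<le> bound (Suc t)" for a t
  proof (rule antisym)
    show "stage_of a \<le> t" unfolding stage_of_def using that(2) by (rule Least_le)
    have "a \<le> bound (Suc (stage_of a))" unfolding stage_of_def using that(2) by (rule LeastI)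
    show "t \<le> stage_of a"
    proof (rule ccontr)
      assume "\<not> t \<le> stage_of a"
      then have "bound (Suc (stage_of a)) \<le> bound t" using mono by (simp add: strict_mono_less_eq)
      then show False using that(1) \<open>a \<le> bound (Suc (stage_of a))\<close> by linarith
    qed
  qed
  define c where "c a = g (bound (stage_of a)) a" for a
  have "\<forall>a\<in>A. c a < r" using stage(3) by (simp add: c_def)
  then obtain N where N: "\<forall>k\<ge>N. \<exists>i<r. k \<in> subsums {a\<in>A. c a = i}"
    using complete unfolding ramsey_complete_def by blast
  have "N \<le> bound N" using mono by (rule strict_mono_imp_increasing)
  then obtain i where "n (bound N) \<in> subsums {a\<in>A. c a = i}"
    using N stage(2)[of "bound N"] by (meson less_imp_le order.trans)
  moreover have "\<forall>a\<in>A. bound N < a \<and> a \<le> M (bound N) \<longrightarrow> c a = g (bound N) a"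
    using stage_of[where t=N] by (auto simp: c_def bound_Suc)
  ultimately show False using blocking[of "bound N"] unfolding blocks_def by blast
qed

lemma exists_blocking_stage:
  fixes r N0 m :: nat and A :: "nat set"
  assumes "r \<ge> 2" "0 \<notin> A"
    and density: "\<forall>n\<ge>N0. real (count_upto A n) \<le> (real r - 1) / 140 * (log 2 (real n))^2"
  shows "\<exists>M g n. m < M \<and> m < n \<and> (\<forall>a. g a < r) \<and> blocks A m M g n"
proof -
  define p where "p = (r + 3) div 5"
  define q where "q = r - p"
  define D where "D = r + 2 * m + N0 + 4"
  have pq: "p > 0" "q > 0" "p + q = r" "real r - 1 \<le> 5 * p" "4 * (real r - 1) \<le> 5 * q"
    using assms(1) by (auto simp: p_def q_def)
  have D0: "D > 0" by (simp add: D_def)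
  have "N0 \<le> 16 * D" by (simp add: D_def)
  then have "N0 \<le> 2^(16*D)" using less_exp[of "16*D"] by linarith
  moreover have "log 2 (real (2^(16*D))) = 16 * real D" by simp
  ultimately have "real (count_upto A (2^(16*D))) \<le> (real r - 1) / 140 * (16 * real D)^2"
    using density by metis
  then obtain L where L: "8 * D \<le> L"
    and small: "real (\<Sum>(small_terms A D L)) < 2/5 * p * 2^L"
    and medium: "(\<Sum>a\<in>medium_terms A D L. medium_weight D L a) < 16/5 * q * D"
    using exists_good_scale[OF assms(2) D0 pq(1,2,4,5)] by auto
  have sizes: "2 * m + 4 \<le> L" "q + 7 * D + 2 * m + 3 \<le> L" using L pq(3) by (simp_all add: D_def)
  obtain g n where g: "\<forall>a. g a < r" and n: "2^L < 2 * n" and "blocks A m (2^L) g n"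
    using exists_blocked_number[OF D0 pq(1,2) sizes small medium] unfolding pq(3) by blast
  moreover have "2 * m < 2^L"
  proof -
    have "2 * m < 2^(Suc m)" using less_exp[of m] by simp
    also have "\<dots> \<le> 2^L" using L by (intro power_increasing) (auto simp: D_def)
    finally show ?thesis .
  qed
  ultimately show ?thesis using n by (intro exI[of _ "2^L"] exI[of _ g] exI[of _ n]) auto
qed

theorem theorem3p5:
  fixes r :: nat and A :: "nat set"
  assumes "r \<ge> 2"
    and "\<forall>a\<in>A. a > 0"
    and "\<exists>N. \<forall>n\<ge>N. real (count_upto A n) \<le> (real r - 1) / 140 * (log 2 (real n))^2"
  shows "\<not> ramsey_complete r A"
proof -
  obtain N0 where "\<forall>n\<ge>N0. real (count_upto A n) \<le> (real r - 1) / 140 * (log 2 (real n))^2"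
    using assms(3) by blast
  moreover have "0 \<notin> A" using assms(2) by blast
  ultimately show ?thesis
    using exists_blocking_stage[OF assms(1)] by (intro not_ramsey_complete_if_blocking) blast
qed

end
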